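(* Let $\Phi=(A;A^*;\{E_i\}_{i=0}^d;\{E^*_i\}_{i=0}^d)$ be a Leonard system in $\mathcal A$ with eigenvalue sequence $\theta_0,\dots,\theta_d$, dual eigenvalue sequence $\theta^*_0,\dots,\theta^*_d$ and second split sequence $\phi_1,\dots,\phi_d$. Then $$\nu=\frac{\eta_d(\theta_0)\,\eta^*_d(\theta^*_0)}{\phi_1\phi_2\cdots\phi_d},\qquad\text{i.e.}\qquad \frac{1}{\mathrm{tr}(E_0E^*_0)}=\frac{\prod_{h=1}^{d}(\theta_0-\theta_h)\prod_{h=1}^d(\theta^*_0-\theta^*_h)}{\phi_1\phi_2\cdots\phi_d}.$$
   Context: Let $\mathbb K$ be a field, $d\ge 0$ an integer, and $\mathcal A$ a $\mathbb K$-algebra isomorphic to the full matrix algebra $\mathrm{Mat}_{d+1}(\mathbb K)$; $I$ is its identity. An element of $\mathcal A$ is multiplicity-free if it has $d+1$ mutually distinct eigenvalues in $\mathbb K$. If $A$ is multiplicity-free with eigenvalues $\theta_0,\dots,\theta_d$, the primitive idempotent of $A$ associated with $\theta_i$ is $E_i=\prod_{j\ne i}(A-\theta_jI)/(\theta_i-\theta_j)$. A Leonard system in $\mathcal A$ is a sequence $\Phi=(A;A^*;\{E_i\}_{i=0}^d;\{E^*_i\}_{i=0}^d)$ such that (i) $A,A^*\in\mathcal A$ are multiplicity-free; (ii) $E_0,\dots,E_d$ is an ordering of the primitive idempotents of $A$; (iii) $E^*_0,\dots,E^*_d$ is an ordering of the primitive idempotents of $A^*$; (iv) $E_iA^*E_j=0$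 if $|i-j|>1$ and $E_iA^*E_j\ne0$ if $|i-j|=1$ ($0\le i,j\le d$); (v) $E^*_iAE^*_j=0$ if $|i-j|>1$ and $E^*_iAE^*_j\ne0$ if $|i-j|=1$ ($0\le i,j\le d$). Here $A^*$ is merely notation (not an adjoint). $\theta_i$ (resp. $\theta^*_i$) is the eigenvalue of $A$ (resp. $A^*$) associated with $E_i$ (resp. $E^*_i$). The scalar $\mathrm{tr}(E_0E^*_0)$ is nonzero and $\nu$ is its inverse. First split sequence of a Leonard system $\Psi=(B;B^*;\{F_i\};\{F^*_i\})$ with eigenvalues $\sigma_i$ (for $F_i$) and dual eigenvalues $\sigma^*_i$ (for $F^*_i$): on an irreducible module $V$, $U_i=(F^*_0V+\cdots+F^*_iV)\cap(F_iV+\cdots+F_dV)$ is $1$-dimensional and, for $1\le i\le d$, an eigenspace of $(B-\sigma_{i-1}I)(B^*-\sigma^*_iI)$ with nonzero eigenvalue, denoted $\varphi_i(\Psi)$. The second split sequence of $\Phi$ is $\phi_i=\varphi_i(\Phi^{\Downarrow})$, where $\Phi^{\Downarrow}=(A;A^*;\{E_{d-i}\}_{i=0}^d;\{E^*_i\}_{i=0}^d)$ (also a Leonard system). Polynomials: $\eta_i=\prod_{h=0}^{i-1}(\lambda-\theta_{d-h})$, $\eta^*_i=\prod_{h=0}^{i-1}(\lambda-\theta^*_{d-h})$. *)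

theory Defs
  imports "Jordan_Normal_Form.Char_Poly"
begin

text \<open>We take the algebra to be Mat_{d+1}(K) itself (represented as 'a mat in
carrier_mat (d+1) (d+1)), and its irreducible module V to be K^{d+1}.\<close>

definition mat_trace :: "'a::comm_ring_1 mat \<Rightarrow> 'a" where
  "mat_trace M = (\<Sum>i<dim_row M. M $$ (i, i))"

definition mult_free :: "nat \<Rightarrow> 'a::field mat \<Rightarrow> bool" where
  "mult_free d A \<longleftrightarrow> A \<in> carrier_mat (Suc d) (Suc d) \<and>
     (\<exists>th::nat \<Rightarrow> 'a. inj_on th {0..d} \<and> (\<forall>i\<le>d. eigenvalue A (th i)))"

definition prim_idem :: "nat \<Rightarrow> 'a::field mat \<Rightarrow> (nat \<Rightarrow> 'a) \<Rightarrow> nat \<Rightarrow> 'a mat" where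
  "prim_idem d A th i =
     foldr (\<lambda>j M. ((1 / (th i - th j)) \<cdot>\<^sub>m (A - th j \<cdot>\<^sub>m 1\<^sub>m (Suc d))) * M)
       (filter (\<lambda>j. j \<noteq> i) [0..<Suc d]) (1\<^sub>m (Suc d))"

definition idem_ordering :: "nat \<Rightarrow> 'a::field mat \<Rightarrow> (nat \<Rightarrow> 'a mat) \<Rightarrow> bool" where
  "idem_ordering d A E \<longleftrightarrow>
     (\<exists>th::nat \<Rightarrow> 'a. inj_on th {0..d} \<and> (\<forall>i\<le>d. eigenvalue A (th i)) \<and>
        (\<forall>i\<le>d. E i = prim_idem d A th i))"

definition leonard_system ::
  "nat \<Rightarrow> 'a::field mat \<Rightarrow> 'a mat \<Rightarrow> (nat \<Rightarrow> 'a mat) \<Rightarrow> (nat \<Rightarrow> 'a mat) \<Rightarrow> bool" where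
  "leonard_system d A As E Es \<longleftrightarrow>
     mult_free d A \<and> mult_free d As \<and> idem_ordering d A E \<and> idem_ordering d As Es \<and>
     (\<forall>i\<le>d. \<forall>j\<le>d. (i > j + 1 \<or> j > i + 1) \<longrightarrow> E i * As * E j = 0\<^sub>m (Suc d) (Suc d)) \<and>
     (\<forall>i\<le>d. \<forall>j\<le>d. (i = j + 1 \<or> j = i + 1) \<longrightarrow> E i * As * E j \<noteq> 0\<^sub>m (Suc d) (Suc d)) \<and>
     (\<forall>i\<le>d. \<forall>j\<le>d. (i > j + 1 \<or> j > i + 1) \<longrightarrow> Es i * A * Es j = 0\<^sub>m (Suc d) (Suc d)) \<and>
     (\<forall>i\<le>d. \<forall>j\<le>d. (i = j + 1 \<or> j = i + 1) \<longrightarrow> Es i * A * Es j \<noteq> 0\<^sub>m (Suc d) (Suc d))"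

definition assoc_eigenvalues :: "nat \<Rightarrow> 'a::field mat \<Rightarrow> (nat \<Rightarrow> 'a mat) \<Rightarrow> (nat \<Rightarrow> 'a) \<Rightarrow> bool" where
  "assoc_eigenvalues d A E th \<longleftrightarrow> (\<forall>i\<le>d. A * E i = th i \<cdot>\<^sub>m E i)"

definition sum_images :: "nat \<Rightarrow> (nat \<Rightarrow> 'a::field mat) \<Rightarrow> nat list \<Rightarrow> 'a vec set" where
  "sum_images d F hs = {foldr (\<lambda>h acc. F h *\<^sub>v v h + acc) hs (0\<^sub>v (Suc d)) | v.
       \<forall>h. v h \<in> carrier_vec (Suc d)}"

definition split_space ::
  "nat \<Rightarrow> (nat \<Rightarrow> 'a::field mat) \<Rightarrow> (nat \<Rightarrow> 'a mat) \<Rightarrow> nat \<Rightarrow> 'a vec set" where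
  "split_space d F Fs i = sum_images d Fs [0..<Suc i] \<inter> sum_images d F [i..<Suc d]"

definition split_seq ::
  "nat \<Rightarrow> 'a::field mat \<Rightarrow> 'a mat \<Rightarrow> (nat \<Rightarrow> 'a mat) \<Rightarrow> (nat \<Rightarrow> 'a mat) \<Rightarrow>
   (nat \<Rightarrow> 'a) \<Rightarrow> (nat \<Rightarrow> 'a) \<Rightarrow> nat \<Rightarrow> 'a" where
  "split_seq d B Bs F Fs sg sgs i =
     (THE c. \<forall>u \<in> split_space d F Fs i.
        ((B - sg (i - 1) \<cdot>\<^sub>m 1\<^sub>m (Suc d)) * (Bs - sgs i \<cdot>\<^sub>m 1\<^sub>m (Suc d))) *\<^sub>v u = c \<cdot>\<^sub>v u)"

text \<open>Second split sequence: first split sequence of Phi-down = (A; As; E (d-i); Es i),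
  whose eigenvalue sequence is th (d-i).\<close>
definition second_split_seq ::
  "nat \<Rightarrow> 'a::field mat \<Rightarrow> 'a mat \<Rightarrow> (nat \<Rightarrow> 'a mat) \<Rightarrow> (nat \<Rightarrow> 'a mat) \<Rightarrow>
   (nat \<Rightarrow> 'a) \<Rightarrow> (nat \<Rightarrow> 'a) \<Rightarrow> nat \<Rightarrow> 'a" where
  "second_split_seq d A As E Es th ths i =
     split_seq d A As (\<lambda>j. E (d - j)) Es (\<lambda>j. th (d - j)) ths i"

end

(* Diagonalise A and A* with eigenbases P and P*.  In the eigenbasis of A* the matrix of A is
   irreducible tridiagonal, and in the eigenbasis of A the matrix of A* is tridiagonal.  Let u 0
   span E*_0 V and u i = eta_i(A) u 0.  Reading off coordinates in both bases shows that u i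
   spans the split space U_i of the Leonard system with E reversed, and that
   (A* - th*_i I) u i = phi_i u (i - 1).  Hence eta*_d applied to A* maps u d to
   phi_1 ... phi_d u 0.  On the other hand u d lies in E_0 V, so u d = eta_d(th_0) E_0 u 0, and
   comparing E*_0-coordinates gives phi_1 ... phi_d = eta_d(th_0) eta*_d(th*_0) tr(E_0 E*_0). *)
theory Submission
  imports Defs
begin

lemma smult_mat_mult_vec:
  assumes "(N :: 'a::field mat) \<in> carrier_mat n m" and "w \<in> carrier_vec m"
  shows "(a \<cdot>\<^sub>m N) *\<^sub>v w = a \<cdot>\<^sub>v (N *\<^sub>v w)"
  using assms by (intro eq_vecI) (auto simp: scalar_prod_smult_left[of _ w])

lemma shift_mult_vec:
  assumes "(M :: 'a::field mat) \<in> carrier_mat n n" and "x \<in> carrier_vec n"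
  shows "(M - c \<cdot>\<^sub>m 1\<^sub>m n) *\<^sub>v x = M *\<^sub>v x - c \<cdot>\<^sub>v x"
  using assms by (simp add: minus_mult_distrib_mat_vec smult_mat_mult_vec[of _ n n])

lemma mat_diag_mult_vec:
  assumes "(v :: 'a::field vec) \<in> carrier_vec n"
  shows "mat_diag n f *\<^sub>v v = vec n (\<lambda>k. f k * v $ k)"
proof (rule eq_vecI)
  fix i assume "i < dim_vec (vec n (\<lambda>k. f k * v $ k))"
  then have "i < n" by simp
  then show "(mat_diag n f *\<^sub>v v) $ i = vec n (\<lambda>k. f k * v $ k) $ i"
    using assms by (simp add: mat_diag_def scalar_prod_def lessThan_atLeast0
        if_distrib[of "\<lambda>a. a * _"] cong: if_cong)
qed (simp add: mat_diag_def)

lemma mult_mat_vec_zero: "A \<in> carrier_mat n m \<Longrightarrow> A *\<^sub>v 0\<^sub>v m = (0\<^sub>v n :: 'a::field vec)"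
  by (intro eq_vecI) auto

lemma mult_unit_vec:
  assumes "(A :: 'a::field mat) \<in> carrier_mat n m" and "j < m"
  shows "A *\<^sub>v unit_vec m j = col A j"
  using assms by (intro eq_vecI) auto

lemma mult_mat_diag_delta_vec:
  assumes "(P :: 'a::field mat) \<in> carrier_mat m n" and "y \<in> carrier_vec n" and "i < n"
  shows "(P * mat_diag n (\<lambda>k. if k = i then 1 else 0)) *\<^sub>v y = y $ i \<cdot>\<^sub>v col P i"
proof (rule eq_vecI)
  fix r assume "r < dim_vec (y $ i \<cdot>\<^sub>v col P i)"
  then have r: "r < m" using assms(1) by simp
  have "((P * mat_diag n (\<lambda>k. if k = i then 1 else 0)) *\<^sub>v y) $ r
      = (\<Sum>c<n. P $$ (r, c) * (if c = i then 1 else 0) * y $ c)"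
    using assms r by (simp add: mat_diag_mult_right scalar_prod_def lessThan_atLeast0)
  also have "\<dots> = P $$ (r, i) * y $ i"
    using assms(3) by (simp add: if_distrib[of "\<lambda>a. _ * a * _"] cong: if_cong)
  finally show "((P * mat_diag n (\<lambda>k. if k = i then 1 else 0)) *\<^sub>v y) $ r = (y $ i \<cdot>\<^sub>v col P i) $ r"
    using assms r by (simp add: mult.commute)
qed (use assms in simp)

lemma smult_vec_cancel:
  assumes "(a::'a::field) \<cdot>\<^sub>v v = b \<cdot>\<^sub>v v" and "v \<in> carrier_vec n" and "v \<noteq> 0\<^sub>v n"
  shows "a = b"
proof -
  obtain r where "r < n" and "v $ r \<noteq> 0"
    using assms(2,3) by (auto simp: vec_eq_iff)
  moreover have "a * v $ r = b * v $ r"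
    using arg_cong[OF assms(1), of "\<lambda>w. w $ r"] \<open>r < n\<close> assms(2) by simp
  ultimately show ?thesis by simp
qed

lemma mat_eq_zero_if_mult_vec_zero:
  assumes "(N :: 'a::field mat) \<in> carrier_mat n m" and "\<And>y. y \<in> carrier_vec m \<Longrightarrow> N *\<^sub>v y = 0\<^sub>v n"
  shows "N = 0\<^sub>m n m"
proof (rule eq_matI)
  fix r c assume "r < dim_row (0\<^sub>m n m :: 'a mat)" and "c < dim_col (0\<^sub>m n m :: 'a mat)"
  then have "N $$ (r, c) = (N *\<^sub>v unit_vec m c) $ r"
    using assms(1) by simp
  then show "N $$ (r, c) = 0\<^sub>m n m $$ (r, c)"
    using assms(2)[of "unit_vec m c"] \<open>r < _\<close> \<open>c < _\<close> by simp
qed (use assms(1) in auto)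

section \<open>Primitive idempotents of a diagonalizable matrix\<close>

lemma lagrange_basis_at_node:
  fixes f :: "nat \<Rightarrow> 'a::field"
  assumes inj: "inj_on f {0..d}" and "i \<le> d" and "k \<le> d"
  shows "prod_list (map (\<lambda>j. 1 / (f i - f j) * (f k - f j)) (filter (\<lambda>j. j \<noteq> i) [0..<Suc d]))
     = (if k = i then 1 else 0)"
proof (cases "k = i")
  case True
  have "f i \<noteq> f j" if "j \<le> d" "j \<noteq> i" for j
    using inj that \<open>i \<le> d\<close> by (auto dest: inj_onD)
  then have "map (\<lambda>j. 1 / (f i - f j) * (f k - f j)) (filter (\<lambda>j. j \<noteq> i) [0..<Suc d])
      = map (\<lambda>_. 1) (filter (\<lambda>j. j \<noteq> i) [0..<Suc d])"
    using True by (intro map_cong) (auto simp del: upt_Suc)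
  then show ?thesis
    using True by (simp only: map_replicate_const prod_list_replicate) simp
next
  case False
  then have "0 \<in> set (map (\<lambda>j. 1 / (f i - f j) * (f k - f j)) (filter (\<lambda>j. j \<noteq> i) [0..<Suc d]))"
    using \<open>k \<le> d\<close> by (auto simp del: upt_Suc intro!: image_eqI[where x=k])
  then show ?thesis
    using False by (simp add: prod_list_zero_iff)
qed

lemma linear_factors_carrier:
  assumes "M \<in> carrier_mat n n"
  shows "foldr (\<lambda>j N. (a j \<cdot>\<^sub>m (M - b j \<cdot>\<^sub>m 1\<^sub>m n)) * N) js (1\<^sub>m n) \<in> carrier_mat n n"
  using assms by (induction js) auto

lemma linear_factors_mult_eigenvectors:
  fixes M P :: "'a::field mat"
  assumes M: "M \<in> carrier_mat n n" and P: "P \<in> carrier_mat n n" and MP: "M * P = P * mat_diag n f"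
  shows "foldr (\<lambda>j N. (a j \<cdot>\<^sub>m (M - b j \<cdot>\<^sub>m 1\<^sub>m n)) * N) js (1\<^sub>m n) * P
       = P * mat_diag n (\<lambda>k. prod_list (map (\<lambda>j. a j * (f k - b j)) js))"
proof (induction js)
  case Nil
  show ?case using P by simp
next
  case (Cons j js)
  let ?F = "foldr (\<lambda>j N. (a j \<cdot>\<^sub>m (M - b j \<cdot>\<^sub>m 1\<^sub>m n)) * N) js (1\<^sub>m n)"
  let ?S = "a j \<cdot>\<^sub>m (M - b j \<cdot>\<^sub>m 1\<^sub>m n)"
  let ?D = "mat_diag n (\<lambda>k. prod_list (map (\<lambda>j. a j * (f k - b j)) js))"
  have S: "?S \<in> carrier_mat n n" and F: "?F \<in> carrier_mat n n"
    using M linear_factors_carrier[OF M] by auto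
  have "?S * P = a j \<cdot>\<^sub>m ((M - b j \<cdot>\<^sub>m 1\<^sub>m n) * P)"
    using M P by (intro mult_smult_assoc_mat) auto
  also have "(M - b j \<cdot>\<^sub>m 1\<^sub>m n) * P = M * P - b j \<cdot>\<^sub>m P"
    using M P by (simp add: minus_mult_distrib_mat[of _ n n] mult_smult_assoc_mat[of _ n n])
  also have "a j \<cdot>\<^sub>m (M * P - b j \<cdot>\<^sub>m P) = P * mat_diag n (\<lambda>k. a j * (f k - b j))"
    using P unfolding MP by (intro eq_matI) (auto simp: mat_diag_mult_right algebra_simps)
  finally have factor: "?S * P = P * mat_diag n (\<lambda>k. a j * (f k - b j))" .
  have "?S * ?F * P = ?S * (?F * P)"
    using S F P by simp
  also have "\<dots> = ?S * P * ?D"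
    unfolding Cons.IH using assoc_mult_mat[OF S P mat_diag_dim] by simp
  also have "\<dots> = P * (mat_diag n (\<lambda>k. a j * (f k - b j)) * ?D)"
    unfolding factor using assoc_mult_mat[OF P mat_diag_dim mat_diag_dim] by simp
  finally show ?case
    by (simp add: ac_simps)
qed

lemma prim_idem_carrier:
  "M \<in> carrier_mat (Suc d) (Suc d) \<Longrightarrow> prim_idem d M f i \<in> carrier_mat (Suc d) (Suc d)"
  unfolding prim_idem_def by (rule linear_factors_carrier)

lemma prim_idem_mult_eigenvectors:
  fixes M P :: "'a::field mat"
  assumes "M \<in> carrier_mat (Suc d) (Suc d)" and "P \<in> carrier_mat (Suc d) (Suc d)"
    and "M * P = P * mat_diag (Suc d) f" and "inj_on f {0..d}" and "i \<le> d"
  shows "prim_idem d M f i * P = P * mat_diag (Suc d) (\<lambda>k. if k = i then 1 else 0)"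
proof -
  have "mat_diag (Suc d) (\<lambda>k. prod_list (map (\<lambda>j. 1 / (f i - f j) * (f k - f j)) (filter (\<lambda>j. j \<noteq> i) [0..<Suc d])))
      = mat_diag (Suc d) (\<lambda>k. if k = i then 1 else 0)"
    using lagrange_basis_at_node[OF assms(4,5)] by (intro eq_matI) (auto simp: mat_diag_def)
  moreover have "prim_idem d M f i * P = P * mat_diag (Suc d)
      (\<lambda>k. prod_list (map (\<lambda>j. 1 / (f i - f j) * (f k - f j)) (filter (\<lambda>j. j \<noteq> i) [0..<Suc d])))"
    unfolding prim_idem_def by (rule linear_factors_mult_eigenvectors[OF assms(1-3)])
  ultimately show ?thesis
    by simp
qed

lemma eigenvector_columns_det_nonzero:
  fixes M P :: "'a::field mat"
  assumes M: "M \<in> carrier_mat (Suc d) (Suc d)" and P: "P \<in> carrier_mat (Suc d) (Suc d)"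
    and MP: "M * P = P * mat_diag (Suc d) f" and inj: "inj_on f {0..d}"
    and nonzero: "\<And>i. i \<le> d \<Longrightarrow> col P i \<noteq> 0\<^sub>v (Suc d)"
  shows "det P \<noteq> 0"
proof
  assume "det P = 0"
  then obtain y where y: "y \<in> carrier_vec (Suc d)" "y \<noteq> 0\<^sub>v (Suc d)" "P *\<^sub>v y = 0\<^sub>v (Suc d)"
    using det_0_iff_vec_prod_zero_field[OF P] by blast
  have "y $ i = 0" if i: "i \<le> d" for i
  proof -
    txt \<open>The primitive idempotent \<open>E\<^sub>i\<close> maps \<open>P y\<close> to \<open>y\<^sub>i\<close> times the \<open>i\<close>-th column.\<close>
    have "y $ i \<cdot>\<^sub>v col P i = (prim_idem d M f i * P) *\<^sub>v y"
      using mult_mat_diag_delta_vec[OF P y(1)] i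
      by (simp add: prim_idem_mult_eigenvectors[OF M P MP inj i])
    also have "\<dots> = prim_idem d M f i *\<^sub>v (P *\<^sub>v y)"
      by (rule assoc_mult_mat_vec[OF prim_idem_carrier[OF M] P y(1)])
    also have "\<dots> = 0 \<cdot>\<^sub>v col P i"
      unfolding y(3) mult_mat_vec_zero[OF prim_idem_carrier[OF M]] using P by auto
    finally have "y $ i \<cdot>\<^sub>v col P i = 0 \<cdot>\<^sub>v col P i" .
    moreover have "col P i \<in> carrier_vec (Suc d)"
      using P by (auto simp: col_def)
    ultimately show ?thesis
      using smult_vec_cancel nonzero[OF i] by blast
  qed
  then have "y = 0\<^sub>v (Suc d)"
    using y(1) by (intro eq_vecI) (auto simp: less_Suc_eq_le)
  with y(2) show False ..
qed

lemma diagonalization_exists: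
  fixes M :: "'a::field mat"
  assumes M: "M \<in> carrier_mat (Suc d) (Suc d)" and inj: "inj_on f {0..d}"
    and ev: "\<forall>i\<le>d. eigenvalue M (f i)"
  obtains P Q where "P \<in> carrier_mat (Suc d) (Suc d)" and "Q \<in> carrier_mat (Suc d) (Suc d)"
    and "P * Q = 1\<^sub>m (Suc d)" and "Q * P = 1\<^sub>m (Suc d)" and "M * P = P * mat_diag (Suc d) f"
proof -
  obtain v where v: "\<And>i. i \<le> d \<Longrightarrow> eigenvector M (v i) (f i)"
    using ev unfolding eigenvalue_def by metis
  then have v_carrier: "v i \<in> carrier_vec (Suc d)" and v_nonzero: "v i \<noteq> 0\<^sub>v (Suc d)"
    and Mv: "M *\<^sub>v v i = f i \<cdot>\<^sub>v v i" if "i \<le> d" for i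
    using M that unfolding eigenvector_def by auto
  define P where "P = mat (Suc d) (Suc d) (\<lambda>(r, c). v c $ r)"
  have P: "P \<in> carrier_mat (Suc d) (Suc d)"
    by (simp add: P_def)
  have col_P: "col P c = v c" if "c \<le> d" for c
    using v_carrier[OF that] that unfolding P_def by (intro eq_vecI) auto
  have MP: "M * P = P * mat_diag (Suc d) f"
  proof (rule eq_matI)
    fix r c assume "r < dim_row (P * mat_diag (Suc d) f)" and "c < dim_col (P * mat_diag (Suc d) f)"
    then have r: "r < Suc d" and c: "c \<le> d"
      using P by (auto simp: mat_diag_def)
    have "(M * P) $$ (r, c) = (M *\<^sub>v col P c) $ r"
      using M P r c by simp
    also have "\<dots> = f c * v c $ r"
      using r c v_carrier[OF c] by (simp add: col_P Mv)
    also have "\<dots> = (P * mat_diag (Suc d) f) $$ (r, c)"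
      unfolding mat_diag_mult_right[OF P] using r c by (simp add: P_def)
    finally show "(M * P) $$ (r, c) = (P * mat_diag (Suc d) f) $$ (r, c)" .
  qed (use M P in \<open>auto simp: mat_diag_def\<close>)
  have "det P \<noteq> 0"
    using eigenvector_columns_det_nonzero[OF M P MP inj] col_P v_nonzero by simp
  from det_non_zero_imp_unit[OF P this, of "()"]
  obtain Q where "Q \<in> carrier_mat (Suc d) (Suc d)" "Q * P = 1\<^sub>m (Suc d)" "P * Q = 1\<^sub>m (Suc d)"
    unfolding Units_def ring_mat_def by auto
  with P MP show thesis
    using that by blast
qed

section \<open>Shifts of upper Hessenberg matrices\<close>

definition vanishes_above :: "nat \<Rightarrow> 'a::zero vec \<Rightarrow> bool" where
  "vanishes_above p z \<longleftrightarrow> (\<forall>k<dim_vec z. p < k \<longrightarrow> z $ k = 0)"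

lemma last_nonzero_exists:
  assumes "z \<in> carrier_vec n" and "z \<noteq> 0\<^sub>v n"
  obtains p where "p < n" and "vanishes_above p z" and "z $ p \<noteq> 0"
proof -
  define K where "K = {k. k < n \<and> z $ k \<noteq> 0}"
  have "finite K" and "K \<noteq> {}"
    using assms by (auto simp: K_def vec_eq_iff)
  then have "Max K \<in> K" and "\<And>k. k \<in> K \<Longrightarrow> k \<le> Max K"
    by auto
  then show ?thesis
    using assms(1) by (intro that[of "Max K"]) (auto simp: K_def vanishes_above_def not_le[symmetric])
qed

definition upper_hessenberg :: "'a::zero mat \<Rightarrow> bool" where
  "upper_hessenberg B \<longleftrightarrow> (\<forall>k<dim_row B. \<forall>l<dim_col B. Suc l < k \<longrightarrow> B $$ (k, l) = 0)"

lemma hessenberg_shift_vanishes_above: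
  fixes B :: "'a::field mat"
  assumes B: "B \<in> carrier_mat n n" and hess: "upper_hessenberg B"
    and z: "z \<in> carrier_vec n" and van: "vanishes_above p z"
  shows "vanishes_above (Suc p) (B *\<^sub>v z - c \<cdot>\<^sub>v z)"
  unfolding vanishes_above_def
proof (intro allI impI)
  fix k assume "k < dim_vec (B *\<^sub>v z - c \<cdot>\<^sub>v z)" and "Suc p < k"
  then have k: "k < n"
    using B z by auto
  have "B $$ (k, l) * z $ l = 0" if "l < n" for l
  proof (cases "p < l")
    case True
    with van z that show ?thesis by (simp add: vanishes_above_def)
  next
    case False
    with hess B k \<open>Suc p < k\<close> that show ?thesis by (simp add: upper_hessenberg_def)
  qed
  then show "(B *\<^sub>v z - c \<cdot>\<^sub>v z) $ k = 0"
    using B z van k \<open>Suc p < k\<close> by (simp add: vanishes_above_def scalar_prod_def sum.neutral)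
qed

lemma hessenberg_shift_last_nonzero:
  fixes B :: "'a::field mat"
  assumes B: "B \<in> carrier_mat n n" and hess: "upper_hessenberg B" and sub: "B $$ (Suc p, p) \<noteq> 0"
    and p: "Suc p < n" and z: "z \<in> carrier_vec n" and van: "vanishes_above p z" and zp: "z $ p \<noteq> 0"
  shows "(B *\<^sub>v z - c \<cdot>\<^sub>v z) $ Suc p \<noteq> 0"
proof -
  have "B $$ (Suc p, l) * z $ l = 0" if "l < n" and "l \<noteq> p" for l
  proof (cases "p < l")
    case True
    with van z that show ?thesis by (simp add: vanishes_above_def)
  next
    case False
    with hess B p that show ?thesis by (simp add: upper_hessenberg_def)
  qed
  then have "(\<Sum>l<n. B $$ (Suc p, l) * z $ l) = (\<Sum>l<n. if l = p then B $$ (Suc p, p) * z $ p else 0)"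
    by (intro sum.cong) auto
  then have "(B *\<^sub>v z) $ Suc p = B $$ (Suc p, p) * z $ p"
    using B z p by (simp add: scalar_prod_def lessThan_atLeast0)
  then show ?thesis
    using B z p sub zp van by (simp add: vanishes_above_def)
qed

text \<open>\<open>shift_iter n M g x i = (M - g (i - 1) I) \<cdots> (M - g 0 I) x\<close>; for \<open>g h = \<theta> (d - h)\<close>
  this is \<open>\<eta>\<^sub>i(M) x\<close>.\<close>
fun shift_iter :: "nat \<Rightarrow> 'a::field mat \<Rightarrow> (nat \<Rightarrow> 'a) \<Rightarrow> 'a vec \<Rightarrow> nat \<Rightarrow> 'a vec" where
  "shift_iter n M g x 0 = x"
| "shift_iter n M g x (Suc i) = (M - g i \<cdot>\<^sub>m 1\<^sub>m n) *\<^sub>v shift_iter n M g x i"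

lemma shift_iter_carrier:
  "M \<in> carrier_mat n n \<Longrightarrow> x \<in> carrier_vec n \<Longrightarrow> shift_iter n M g x i \<in> carrier_vec n"
  by (induction i) (auto intro!: mult_mat_vec_carrier[of _ n n])

text \<open>The columns of \<open>P\<close> are eigenvectors of \<open>M\<close> for \<open>f 0, \<dots>, f d\<close>, and \<open>Q *\<^sub>v x\<close> is the
  coordinate vector of \<open>x\<close> in this basis.\<close>
locale eigenbasis =
  fixes d :: nat and M P Q :: "'a::field mat" and f :: "nat \<Rightarrow> 'a"
  assumes M_carrier: "M \<in> carrier_mat (Suc d) (Suc d)"
    and P_carrier: "P \<in> carrier_mat (Suc d) (Suc d)"
    and Q_carrier: "Q \<in> carrier_mat (Suc d) (Suc d)"
    and P_Q: "P * Q = 1\<^sub>m (Suc d)" and Q_P: "Q * P = 1\<^sub>m (Suc d)"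
    and M_P: "M * P = P * mat_diag (Suc d) f"
    and inj: "inj_on f {0..d}"
begin

lemma P_mult_coords: "x \<in> carrier_vec (Suc d) \<Longrightarrow> P *\<^sub>v (Q *\<^sub>v x) = x"
  using assoc_mult_mat_vec[OF P_carrier Q_carrier, of x] P_Q by simp

lemma coords_inject:
  "x \<in> carrier_vec (Suc d) \<Longrightarrow> y \<in> carrier_vec (Suc d) \<Longrightarrow> Q *\<^sub>v x = Q *\<^sub>v y \<Longrightarrow> x = y"
  by (metis P_mult_coords)

lemma coords_eq_zero_iff: "x \<in> carrier_vec (Suc d) \<Longrightarrow> Q *\<^sub>v x = 0\<^sub>v (Suc d) \<longleftrightarrow> x = 0\<^sub>v (Suc d)"
  using coords_inject[of x "0\<^sub>v (Suc d)"] mult_mat_vec_zero[OF Q_carrier] by auto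

lemma col_P_carrier [simp]: "col P j \<in> carrier_vec (Suc d)"
  using P_carrier by (auto simp: col_def)

lemma coords_col_P: "j < Suc d \<Longrightarrow> Q *\<^sub>v col P j = unit_vec (Suc d) j"
  using col_mult2[OF Q_carrier P_carrier, of j] Q_P by simp

lemma col_P_nonzero: "j < Suc d \<Longrightarrow> col P j \<noteq> 0\<^sub>v (Suc d)"
proof
  assume j: "j < Suc d" and "col P j = 0\<^sub>v (Suc d)"
  then have "unit_vec (Suc d) j = (0\<^sub>v (Suc d) :: 'a vec)"
    using coords_col_P[OF j] mult_mat_vec_zero[OF Q_carrier] by simp
  with j show False
    by simp
qed

lemma coords_mult:
  assumes "X \<in> carrier_mat (Suc d) (Suc d)" and "x \<in> carrier_vec (Suc d)"
  shows "Q *\<^sub>v (X *\<^sub>v x) = (Q * X * P) *\<^sub>v (Q *\<^sub>v x)"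
proof -
  have "(Q * X * P) *\<^sub>v (Q *\<^sub>v x) = (Q * X) *\<^sub>v (P *\<^sub>v (Q *\<^sub>v x))"
    using assms P_carrier Q_carrier by (intro assoc_mult_mat_vec) auto
  then show ?thesis
    using assms Q_carrier by (simp add: P_mult_coords)
qed

lemma coords_mult_col_P:
  assumes "X \<in> carrier_mat (Suc d) (Suc d)" and "i < Suc d" and "j < Suc d"
  shows "(Q *\<^sub>v (X *\<^sub>v col P j)) $ i = (Q * X * P) $$ (i, j)"
  using assms P_carrier Q_carrier by (simp add: coords_mult coords_col_P)

lemma conj_M_eq_diag: "Q * M * P = mat_diag (Suc d) f"
  using assoc_mult_mat[OF Q_carrier M_carrier P_carrier]
    assoc_mult_mat[OF Q_carrier P_carrier mat_diag_dim, of f]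
  by (simp add: M_P Q_P left_mult_one_mat[OF mat_diag_dim])

lemma coords_minus_smult:
  assumes "x \<in> carrier_vec (Suc d)" and "y \<in> carrier_vec (Suc d)"
  shows "Q *\<^sub>v (x - t \<cdot>\<^sub>v y) = Q *\<^sub>v x - t \<cdot>\<^sub>v (Q *\<^sub>v y)"
  using assms by (simp add: mult_minus_distrib_mat_vec[OF Q_carrier] mult_mat_vec[OF Q_carrier])

lemma coords_shift_mult:
  assumes "X \<in> carrier_mat (Suc d) (Suc d)" and "x \<in> carrier_vec (Suc d)"
  shows "Q *\<^sub>v ((X - c \<cdot>\<^sub>m 1\<^sub>m (Suc d)) *\<^sub>v x) = (Q * X * P) *\<^sub>v (Q *\<^sub>v x) - c \<cdot>\<^sub>v (Q *\<^sub>v x)"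
  using assms Q_carrier
  by (simp add: shift_mult_vec mult_minus_distrib_mat_vec[of Q _ "Suc d"] mult_mat_vec coords_mult)

lemma coords_shift:
  assumes "x \<in> carrier_vec (Suc d)"
  shows "Q *\<^sub>v ((M - c \<cdot>\<^sub>m 1\<^sub>m (Suc d)) *\<^sub>v x) = vec (Suc d) (\<lambda>k. (f k - c) * (Q *\<^sub>v x) $ k)"
proof -
  have "Q *\<^sub>v ((M - c \<cdot>\<^sub>m 1\<^sub>m (Suc d)) *\<^sub>v x) = mat_diag (Suc d) f *\<^sub>v (Q *\<^sub>v x) - c \<cdot>\<^sub>v (Q *\<^sub>v x)"
    using coords_shift_mult[OF M_carrier assms] by (simp add: conj_M_eq_diag)
  also have "\<dots> = vec (Suc d) (\<lambda>k. (f k - c) * (Q *\<^sub>v x) $ k)"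
    using assms Q_carrier by (intro eq_vecI) (simp_all add: mat_diag_mult_vec left_diff_distrib)
  finally show ?thesis .
qed

lemma M_mult_col_P:
  assumes "j < Suc d"
  shows "M *\<^sub>v col P j = f j \<cdot>\<^sub>v col P j"
proof (rule coords_inject)
  have "Q *\<^sub>v (M *\<^sub>v col P j) = mat_diag (Suc d) f *\<^sub>v unit_vec (Suc d) j"
    using coords_mult[OF M_carrier col_P_carrier] assms by (simp add: conj_M_eq_diag coords_col_P)
  also have "\<dots> = f j \<cdot>\<^sub>v unit_vec (Suc d) j"
    by (intro eq_vecI) (auto simp: mat_diag_mult_vec unit_vec_def)
  also have "\<dots> = Q *\<^sub>v (f j \<cdot>\<^sub>v col P j)"
    using assms by (simp add: mult_mat_vec[OF Q_carrier col_P_carrier] coords_col_P)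
  finally show "Q *\<^sub>v (M *\<^sub>v col P j) = Q *\<^sub>v (f j \<cdot>\<^sub>v col P j)" .
qed (use M_carrier in auto)

lemma prim_idem_eq:
  assumes "i \<le> d"
  shows "prim_idem d M f i = P * mat_diag (Suc d) (\<lambda>k. if k = i then 1 else 0) * Q"
proof -
  have E: "prim_idem d M f i \<in> carrier_mat (Suc d) (Suc d)"
    by (rule prim_idem_carrier[OF M_carrier])
  have "prim_idem d M f i = prim_idem d M f i * (P * Q)"
    using E by (simp add: P_Q)
  also have "\<dots> = prim_idem d M f i * P * Q"
    by (rule assoc_mult_mat[symmetric, OF E P_carrier Q_carrier])
  finally show ?thesis
    by (simp add: prim_idem_mult_eigenvectors[OF M_carrier P_carrier M_P inj assms])
qed

lemma prim_idem_mult_vec: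
  assumes "i \<le> d" and "x \<in> carrier_vec (Suc d)"
  shows "prim_idem d M f i *\<^sub>v x = (Q *\<^sub>v x) $ i \<cdot>\<^sub>v col P i"
proof -
  have "P * mat_diag (Suc d) (\<lambda>k. if k = i then 1 else 0) \<in> carrier_mat (Suc d) (Suc d)"
    using P_carrier by simp
  then show ?thesis
    using assms Q_carrier P_carrier
    by (simp add: prim_idem_eq assoc_mult_mat_vec[of _ "Suc d" "Suc d"] mult_mat_diag_delta_vec)
qed

lemma prim_idem_eigenvalue_unique:
  assumes i: "i \<le> d" and eig: "M * prim_idem d M f i = t \<cdot>\<^sub>m prim_idem d M f i"
  shows "t = f i"
proof -
  have E: "prim_idem d M f i \<in> carrier_mat (Suc d) (Suc d)"
    by (rule prim_idem_carrier[OF M_carrier])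
  have E_col: "prim_idem d M f i *\<^sub>v col P i = col P i"
    using i by (simp add: prim_idem_mult_vec coords_col_P)
  have "t \<cdot>\<^sub>v col P i = (t \<cdot>\<^sub>m prim_idem d M f i) *\<^sub>v col P i"
    using E by (simp add: smult_mat_mult_vec E_col)
  also have "\<dots> = M *\<^sub>v col P i"
    using E M_carrier by (simp flip: eig add: E_col)
  also have "\<dots> = f i \<cdot>\<^sub>v col P i"
    using i by (simp add: M_mult_col_P)
  finally have "t \<cdot>\<^sub>v col P i = f i \<cdot>\<^sub>v col P i" .
  from smult_vec_cancel[OF this col_P_carrier col_P_nonzero] i show ?thesis
    by simp
qed

lemma assoc_eigenvalues_unique:
  assumes F: "\<forall>i\<le>d. F i = prim_idem d M f i" and g: "assoc_eigenvalues d M F g" and i: "i \<le> d"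
  shows "g i = f i"
proof (rule prim_idem_eigenvalue_unique[OF i])
  show "M * prim_idem d M f i = g i \<cdot>\<^sub>m prim_idem d M f i"
    using F g i unfolding assoc_eigenvalues_def by simp
qed

lemma prim_idem_sandwich_mult_vec:
  assumes i: "i \<le> d" and j: "j \<le> d" and X: "X \<in> carrier_mat (Suc d) (Suc d)"
    and y: "y \<in> carrier_vec (Suc d)"
  shows "(prim_idem d M f i * X * prim_idem d M f j) *\<^sub>v y
       = ((Q *\<^sub>v y) $ j * (Q * X * P) $$ (i, j)) \<cdot>\<^sub>v col P i"
proof -
  have Ei: "prim_idem d M f i \<in> carrier_mat (Suc d) (Suc d)"
    and Ej: "prim_idem d M f j \<in> carrier_mat (Suc d) (Suc d)"
    using prim_idem_carrier[OF M_carrier] by auto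
  have "(prim_idem d M f i * X * prim_idem d M f j) *\<^sub>v y
      = prim_idem d M f i *\<^sub>v (X *\<^sub>v (prim_idem d M f j *\<^sub>v y))"
    using assoc_mult_mat_vec[OF mult_carrier_mat[OF Ei X] Ej y] assoc_mult_mat_vec[OF Ei X] Ej y
    by simp
  also have "\<dots> = (Q *\<^sub>v y) $ j \<cdot>\<^sub>v (prim_idem d M f i *\<^sub>v (X *\<^sub>v col P j))"
    using Ei X y j by (simp add: prim_idem_mult_vec mult_mat_vec)
  also have "\<dots> = (Q *\<^sub>v y) $ j \<cdot>\<^sub>v ((Q *\<^sub>v (X *\<^sub>v col P j)) $ i \<cdot>\<^sub>v col P i)"
    using X i by (simp add: prim_idem_mult_vec)
  finally show ?thesis
    using X i j by (simp add: coords_mult_col_P smult_smult_assoc)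
qed

lemma prim_idem_sandwich_eq_zero_iff:
  assumes i: "i \<le> d" and j: "j \<le> d" and X: "X \<in> carrier_mat (Suc d) (Suc d)"
  shows "prim_idem d M f i * X * prim_idem d M f j = 0\<^sub>m (Suc d) (Suc d) \<longleftrightarrow> (Q * X * P) $$ (i, j) = 0"
proof
  assume zero: "prim_idem d M f i * X * prim_idem d M f j = 0\<^sub>m (Suc d) (Suc d)"
  have "(Q * X * P) $$ (i, j) \<cdot>\<^sub>v col P i = (prim_idem d M f i * X * prim_idem d M f j) *\<^sub>v col P j"
    using j by (simp add: prim_idem_sandwich_mult_vec[OF i j X] coords_col_P)
  also have "\<dots> = 0 \<cdot>\<^sub>v col P i"
    unfolding zero using P_carrier by (intro eq_vecI) auto
  finally have "(Q * X * P) $$ (i, j) \<cdot>\<^sub>v col P i = 0 \<cdot>\<^sub>v col P i" .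
  from smult_vec_cancel[OF this col_P_carrier col_P_nonzero] i show "(Q * X * P) $$ (i, j) = 0"
    by simp
next
  assume entry: "(Q * X * P) $$ (i, j) = 0"
  show "prim_idem d M f i * X * prim_idem d M f j = 0\<^sub>m (Suc d) (Suc d)"
  proof (rule mat_eq_zero_if_mult_vec_zero)
    show "prim_idem d M f i * X * prim_idem d M f j \<in> carrier_mat (Suc d) (Suc d)"
      using prim_idem_carrier[OF M_carrier] X by (meson mult_carrier_mat)
    fix y :: "'a vec" assume "y \<in> carrier_vec (Suc d)"
    then show "(prim_idem d M f i * X * prim_idem d M f j) *\<^sub>v y = 0\<^sub>v (Suc d)"
      using P_carrier by (intro eq_vecI) (auto simp: prim_idem_sandwich_mult_vec[OF i j X] entry)
  qed
qed

lemma upper_hessenberg_conj_iff: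
  assumes X: "X \<in> carrier_mat (Suc d) (Suc d)"
  shows "upper_hessenberg (Q * X * P) \<longleftrightarrow>
    (\<forall>k\<le>d. \<forall>l\<le>d. Suc l < k \<longrightarrow> prim_idem d M f k * X * prim_idem d M f l = 0\<^sub>m (Suc d) (Suc d))"
proof -
  have "upper_hessenberg (Q * X * P) \<longleftrightarrow> (\<forall>k\<le>d. \<forall>l\<le>d. Suc l < k \<longrightarrow> (Q * X * P) $$ (k, l) = 0)"
    using Q_carrier P_carrier by (simp add: upper_hessenberg_def less_Suc_eq_le)
  also have "\<dots> \<longleftrightarrow>
      (\<forall>k\<le>d. \<forall>l\<le>d. Suc l < k \<longrightarrow> prim_idem d M f k * X * prim_idem d M f l = 0\<^sub>m (Suc d) (Suc d))"
    using prim_idem_sandwich_eq_zero_iff[OF _ _ X] by simp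
  finally show ?thesis .
qed

lemma coords_shift_iter:
  assumes x: "x \<in> carrier_vec (Suc d)"
  shows "Q *\<^sub>v shift_iter (Suc d) M g x i = vec (Suc d) (\<lambda>k. (\<Prod>j<i. f k - g j) * (Q *\<^sub>v x) $ k)"
proof (induction i)
  case 0
  show ?case
    using x Q_carrier by (intro eq_vecI) auto
next
  case (Suc i)
  have "Q *\<^sub>v shift_iter (Suc d) M g x (Suc i)
      = vec (Suc d) (\<lambda>k. (f k - g i) * (Q *\<^sub>v shift_iter (Suc d) M g x i) $ k)"
    using coords_shift[OF shift_iter_carrier[OF M_carrier x]] by simp
  then show ?case
    unfolding Suc.IH by (intro eq_vecI) (simp_all add: ac_simps)
qed

lemma shift_iter_last_nonzero:
  assumes X: "X \<in> carrier_mat (Suc d) (Suc d)" and hess: "upper_hessenberg (Q * X * P)"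
    and sub: "\<forall>q<d. (Q * X * P) $$ (Suc q, q) \<noteq> 0"
    and x: "x \<in> carrier_vec (Suc d)" and van: "vanishes_above p (Q *\<^sub>v x)" and xp: "(Q *\<^sub>v x) $ p \<noteq> 0"
    and "p + i \<le> d"
  shows "vanishes_above (p + i) (Q *\<^sub>v shift_iter (Suc d) X g x i)
    \<and> (Q *\<^sub>v shift_iter (Suc d) X g x i) $ (p + i) \<noteq> 0"
  using \<open>p + i \<le> d\<close>
proof (induction i)
  case 0
  show ?case
    using van xp by simp
next
  case (Suc i)
  let ?u = "shift_iter (Suc d) X g x i"
  have u: "?u \<in> carrier_vec (Suc d)"
    using shift_iter_carrier[OF X x] .
  have IH: "vanishes_above (p + i) (Q *\<^sub>v ?u)" "(Q *\<^sub>v ?u) $ (p + i) \<noteq> 0"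
    using Suc by auto
  have B: "Q * X * P \<in> carrier_mat (Suc d) (Suc d)"
    using X P_carrier Q_carrier by simp
  have "Q *\<^sub>v shift_iter (Suc d) X g x (Suc i) = (Q * X * P) *\<^sub>v (Q *\<^sub>v ?u) - g i \<cdot>\<^sub>v (Q *\<^sub>v ?u)"
    using coords_shift_mult[OF X u] by simp
  moreover have "Suc (p + i) < Suc d"
    using Suc.prems by simp
  moreover have "Q *\<^sub>v ?u \<in> carrier_vec (Suc d)"
    using u Q_carrier by simp
  ultimately show ?case
    using hessenberg_shift_vanishes_above[OF B hess _ IH(1), of "g i"]
      hessenberg_shift_last_nonzero[OF B hess _ _ _ IH, of "g i"] sub Suc.prems by auto
qed

lemma coords_sum_prim_idems_vanish:
  assumes F: "\<forall>h\<in>set hs. F h = prim_idem d M f (g h)" and g: "\<forall>h\<in>set hs. g h \<le> d"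
    and v: "\<forall>h. v h \<in> carrier_vec (Suc d)"
  shows "foldr (\<lambda>h acc. F h *\<^sub>v v h + acc) hs (0\<^sub>v (Suc d)) \<in> carrier_vec (Suc d) \<and>
    (\<forall>k<Suc d. k \<notin> g ` set hs \<longrightarrow> (Q *\<^sub>v foldr (\<lambda>h acc. F h *\<^sub>v v h + acc) hs (0\<^sub>v (Suc d))) $ k = 0)"
  using F g
proof (induction hs)
  case Nil
  then show ?case
    using mult_mat_vec_zero[OF Q_carrier] by simp
next
  case (Cons h hs)
  let ?acc = "foldr (\<lambda>h acc. F h *\<^sub>v v h + acc) hs (0\<^sub>v (Suc d))"
  have acc: "?acc \<in> carrier_vec (Suc d)"
    and IH: "\<forall>k<Suc d. k \<notin> g ` set hs \<longrightarrow> (Q *\<^sub>v ?acc) $ k = 0"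
    using Cons by auto
  have Fh: "F h *\<^sub>v v h = (Q *\<^sub>v v h) $ g h \<cdot>\<^sub>v col P (g h)"
    using Cons.prems v by (simp add: prim_idem_mult_vec)
  have "Q *\<^sub>v (F h *\<^sub>v v h + ?acc) = Q *\<^sub>v (F h *\<^sub>v v h) + Q *\<^sub>v ?acc"
    using acc Fh by (intro mult_add_distrib_mat_vec[OF Q_carrier]) auto
  also have "Q *\<^sub>v (F h *\<^sub>v v h) = (Q *\<^sub>v v h) $ g h \<cdot>\<^sub>v unit_vec (Suc d) (g h)"
    unfolding Fh using Cons.prems by (simp add: mult_mat_vec[OF Q_carrier col_P_carrier] coords_col_P)
  finally have coords: "Q *\<^sub>v (F h *\<^sub>v v h + ?acc)
      = (Q *\<^sub>v v h) $ g h \<cdot>\<^sub>v unit_vec (Suc d) (g h) + Q *\<^sub>v ?acc" .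
  have "(Q *\<^sub>v (F h *\<^sub>v v h + ?acc)) $ k = 0" if "k < Suc d" and "k \<notin> g ` set (h # hs)" for k
    unfolding coords using that IH acc Q_carrier Cons.prems by simp
  moreover have "F h *\<^sub>v v h + ?acc \<in> carrier_vec (Suc d)"
    using acc Fh by simp
  ultimately show ?case
    by simp
qed

lemma sum_prim_idems_mult_vec:
  assumes F: "\<forall>h\<in>set hs. F h = prim_idem d M f (g h)" and g: "\<forall>h\<in>set hs. g h \<le> d"
    and dist: "distinct (map g hs)" and x: "x \<in> carrier_vec (Suc d)"
  shows "foldr (\<lambda>h acc. F h *\<^sub>v x + acc) hs (0\<^sub>v (Suc d))
       = P *\<^sub>v vec (Suc d) (\<lambda>k. if k \<in> g ` set hs then (Q *\<^sub>v x) $ k else 0)"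
  using F g dist
proof (induction hs)
  case Nil
  have "vec (Suc d) (\<lambda>k. 0) = (0\<^sub>v (Suc d) :: 'a vec)"
    by auto
  then show ?case
    using mult_mat_vec_zero[OF P_carrier] by simp
next
  case (Cons h hs)
  let ?z = "vec (Suc d) (\<lambda>k. if k \<in> g ` set hs then (Q *\<^sub>v x) $ k else 0)"
  have "F h *\<^sub>v x = P *\<^sub>v ((Q *\<^sub>v x) $ g h \<cdot>\<^sub>v unit_vec (Suc d) (g h))"
    using Cons.prems x by (simp add: prim_idem_mult_vec mult_mat_vec[OF P_carrier] mult_unit_vec[OF P_carrier])
  then have "F h *\<^sub>v x + P *\<^sub>v ?z = P *\<^sub>v ((Q *\<^sub>v x) $ g h \<cdot>\<^sub>v unit_vec (Suc d) (g h) + ?z)"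
    by (simp add: mult_add_distrib_mat_vec[OF P_carrier])
  also have "(Q *\<^sub>v x) $ g h \<cdot>\<^sub>v unit_vec (Suc d) (g h) + ?z
      = vec (Suc d) (\<lambda>k. if k \<in> g ` set (h # hs) then (Q *\<^sub>v x) $ k else 0)"
    using Cons.prems by (intro eq_vecI) auto
  finally show ?case
    using Cons by simp
qed

lemma mem_sum_images_iff:
  assumes F: "\<forall>h\<in>set hs. F h = prim_idem d M f (g h)" and g: "\<forall>h\<in>set hs. g h \<le> d"
    and dist: "distinct (map g hs)"
  shows "x \<in> sum_images d F hs \<longleftrightarrow>
    x \<in> carrier_vec (Suc d) \<and> (\<forall>k<Suc d. k \<notin> g ` set hs \<longrightarrow> (Q *\<^sub>v x) $ k = 0)"
proof
  assume "x \<in> sum_images d F hs"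
  then obtain v where x: "x = foldr (\<lambda>h acc. F h *\<^sub>v v h + acc) hs (0\<^sub>v (Suc d))"
    and v: "\<forall>h. v h \<in> carrier_vec (Suc d)"
    unfolding sum_images_def by blast
  show "x \<in> carrier_vec (Suc d) \<and> (\<forall>k<Suc d. k \<notin> g ` set hs \<longrightarrow> (Q *\<^sub>v x) $ k = 0)"
    unfolding x by (rule coords_sum_prim_idems_vanish[OF F g v])
next
  assume x: "x \<in> carrier_vec (Suc d) \<and> (\<forall>k<Suc d. k \<notin> g ` set hs \<longrightarrow> (Q *\<^sub>v x) $ k = 0)"
  then have "vec (Suc d) (\<lambda>k. if k \<in> g ` set hs then (Q *\<^sub>v x) $ k else 0) = Q *\<^sub>v x"
    using Q_carrier by (intro eq_vecI) auto
  then have "x = foldr (\<lambda>h acc. F h *\<^sub>v (\<lambda>_. x) h + acc) hs (0\<^sub>v (Suc d))"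
    using sum_prim_idems_mult_vec[OF F g dist] x by (simp add: P_mult_coords)
  then show "x \<in> sum_images d F hs"
    unfolding sum_images_def mem_Collect_eq using x by (intro exI[where x="\<lambda>_. x"]) simp
qed

end

lemma idem_ordering_eigenbasis:
  assumes M: "M \<in> carrier_mat (Suc d) (Suc d)" and "idem_ordering d M F"
  obtains P Q f where "eigenbasis d M P Q f" and "\<forall>i\<le>d. F i = prim_idem d M f i"
proof -
  obtain f where inj: "inj_on f {0..d}" and ev: "\<forall>i\<le>d. eigenvalue M (f i)"
    and F: "\<forall>i\<le>d. F i = prim_idem d M f i"
    using assms(2) unfolding idem_ordering_def by blast
  obtain P Q where "P \<in> carrier_mat (Suc d) (Suc d)" "Q \<in> carrier_mat (Suc d) (Suc d)"
    "P * Q = 1\<^sub>m (Suc d)" "Q * P = 1\<^sub>m (Suc d)" "M * P = P * mat_diag (Suc d) f"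
    using diagonalization_exists[OF M inj ev] by blast
  with M inj F show thesis
    by (intro that[of P Q f]) (auto intro: eigenbasis.intro)
qed

section \<open>The split basis of a Leonard system\<close>

lemma prod_lessThan_reflect: "(\<Prod>h<d. f (d - h)) = (\<Prod>h=1..(d::nat). (f h :: 'a::comm_monoid_mult))"
  by (rule prod.reindex_bij_witness[where i="\<lambda>h. d - h" and j="\<lambda>h. d - h"]) auto

lemma prod_diff_reflect_eq_zero:
  fixes f :: "nat \<Rightarrow> 'a::comm_ring_1"
  assumes "d - i < k" and "k \<le> d"
  shows "(\<Prod>h<i. f k - f (d - h)) = 0"
proof (rule prod_zero)
  show "\<exists>h\<in>{..<i}. f k - f (d - h) = 0"
    using assms by (intro bexI[of _ "d - k"]) auto
qed simp

text \<open>Only half of the Leonard conditions is needed: the matrix of \<open>A\<close> in the eigenbasis of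
  \<open>A\<^sup>*\<close> and that of \<open>A\<^sup>*\<close> in the eigenbasis of \<open>A\<close> are upper Hessenberg, the former with
  nonzero subdiagonal.\<close>
locale leonard_eigenbases =
  A: eigenbasis d A P Q th + S: eigenbasis d As Ps Qs ths
  for d :: nat and A P Q :: "'a::field mat" and th :: "nat \<Rightarrow> 'a"
    and As Ps Qs :: "'a mat" and ths :: "nat \<Rightarrow> 'a" +
  fixes E Es :: "nat \<Rightarrow> 'a mat"
  assumes E: "\<forall>i\<le>d. E i = prim_idem d A th i" and Es: "\<forall>i\<le>d. Es i = prim_idem d As ths i"
    and hessenberg_A: "upper_hessenberg (Qs * A * Ps)"
    and subdiagonal_A: "\<forall>q<d. (Qs * A * Ps) $$ (Suc q, q) \<noteq> 0"
    and hessenberg_As: "upper_hessenberg (Q * As * P)"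
begin

text \<open>\<open>u i = \<eta>\<^sub>i(A) u\<^sub>0\<close> with \<open>u\<^sub>0\<close> spanning \<open>E\<^sup>*\<^sub>0 V\<close>; it spans the split space
  \<open>U\<^sub>i\<close> of \<open>\<Phi>\<^sup>\<Down>\<close>.\<close>
abbreviation u :: "nat \<Rightarrow> 'a vec" where
  "u i \<equiv> shift_iter (Suc d) A (\<lambda>h. th (d - h)) (col Ps 0) i"

lemma u_carrier: "u i \<in> carrier_vec (Suc d)"
  using shift_iter_carrier[OF A.M_carrier S.col_P_carrier] .

lemma u_last_nonzero:
  assumes "i \<le> d"
  shows "vanishes_above i (Qs *\<^sub>v u i)" and "(Qs *\<^sub>v u i) $ i \<noteq> 0"
proof -
  have "vanishes_above 0 (Qs *\<^sub>v col Ps 0)" and "(Qs *\<^sub>v col Ps 0) $ 0 \<noteq> 0"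
    by (auto simp: S.coords_col_P vanishes_above_def)
  from S.shift_iter_last_nonzero[OF A.M_carrier hessenberg_A subdiagonal_A S.col_P_carrier this]
  show "vanishes_above i (Qs *\<^sub>v u i)" and "(Qs *\<^sub>v u i) $ i \<noteq> 0"
    using assms by auto
qed

lemma u_nonzero:
  assumes "i \<le> d"
  shows "u i \<noteq> 0\<^sub>v (Suc d)"
proof
  assume "u i = 0\<^sub>v (Suc d)"
  then have "Qs *\<^sub>v u i = 0\<^sub>v (Suc d)"
    using mult_mat_vec_zero[OF S.Q_carrier] by simp
  with u_last_nonzero(2)[OF assms] assms show False
    by simp
qed

lemma coords_u_vanish:
  assumes "i \<le> d"
  shows "vanishes_above (d - i) (Q *\<^sub>v u i)"
  unfolding vanishes_above_def
proof (intro allI impI)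
  fix k assume k: "k < dim_vec (Q *\<^sub>v u i)" and "d - i < k"
  then have "(\<Prod>h<i. th k - th (d - h)) = 0"
    using prod_diff_reflect_eq_zero[of d i k th] A.Q_carrier by simp
  then show "(Q *\<^sub>v u i) $ k = 0"
    using k A.Q_carrier by (simp add: A.coords_shift_iter[OF S.col_P_carrier])
qed

lemma mem_split_space_iff:
  assumes i: "i \<le> d"
  shows "x \<in> split_space d (\<lambda>j. E (d - j)) Es i \<longleftrightarrow>
    x \<in> carrier_vec (Suc d) \<and> vanishes_above i (Qs *\<^sub>v x) \<and> vanishes_above (d - i) (Q *\<^sub>v x)"
proof -
  have "x \<in> sum_images d Es [0..<Suc i] \<longleftrightarrow>
      x \<in> carrier_vec (Suc d) \<and> (\<forall>k<Suc d. k \<notin> id ` set [0..<Suc i] \<longrightarrow> (Qs *\<^sub>v x) $ k = 0)"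
    using i Es by (intro S.mem_sum_images_iff) (auto simp del: upt_Suc)
  also have "\<dots> \<longleftrightarrow> x \<in> carrier_vec (Suc d) \<and> vanishes_above i (Qs *\<^sub>v x)"
    using S.Q_carrier by (auto simp: vanishes_above_def simp del: upt_Suc)
  finally have dual: "x \<in> sum_images d Es [0..<Suc i] \<longleftrightarrow>
      x \<in> carrier_vec (Suc d) \<and> vanishes_above i (Qs *\<^sub>v x)" .
  have image: "(\<lambda>h. d - h) ` set [i..<Suc d] = {..d - i}"
  proof
    show "{..d - i} \<subseteq> (\<lambda>h. d - h) ` set [i..<Suc d]"
    proof
      fix k assume "k \<in> {..d - i}"
      then have "k = d - (d - k)" and "d - k \<in> set [i..<Suc d]"
        using i by auto
      then show "k \<in> (\<lambda>h. d - h) ` set [i..<Suc d]"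
        by (rule image_eqI)
    qed
  qed auto
  have "x \<in> sum_images d (\<lambda>j. E (d - j)) [i..<Suc d] \<longleftrightarrow>
      x \<in> carrier_vec (Suc d) \<and> (\<forall>k<Suc d. k \<notin> (\<lambda>h. d - h) ` set [i..<Suc d] \<longrightarrow> (Q *\<^sub>v x) $ k = 0)"
    using E by (intro A.mem_sum_images_iff) (auto simp: distinct_map inj_on_def simp del: upt_Suc)
  also have "\<dots> \<longleftrightarrow> x \<in> carrier_vec (Suc d) \<and> vanishes_above (d - i) (Q *\<^sub>v x)"
    unfolding image using A.Q_carrier by (auto simp: vanishes_above_def not_le)
  finally show ?thesis
    unfolding split_space_def using dual by blast
qed

lemma u_mem_split_space: "i \<le> d \<Longrightarrow> u i \<in> split_space d (\<lambda>j. E (d - j)) Es i"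
  using mem_split_space_iff u_carrier u_last_nonzero(1) coords_u_vanish by blast

lemma eq_zero_if_coords_vanish:
  assumes i: "i \<le> d" and z: "z \<in> carrier_vec (Suc d)"
    and low: "\<forall>k<Suc d. i \<le> k \<longrightarrow> (Qs *\<^sub>v z) $ k = 0"
    and high: "vanishes_above (d - i) (Q *\<^sub>v z)"
  shows "z = 0\<^sub>v (Suc d)"
proof (rule ccontr)
  assume "z \<noteq> 0\<^sub>v (Suc d)"
  then have "Qs *\<^sub>v z \<noteq> 0\<^sub>v (Suc d)"
    using S.coords_eq_zero_iff[OF z] by simp
  then obtain m where m: "m < Suc d" "vanishes_above m (Qs *\<^sub>v z)" "(Qs *\<^sub>v z) $ m \<noteq> 0"
    using last_nonzero_exists[of "Qs *\<^sub>v z" "Suc d"] S.Q_carrier z by auto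
  then have "m < i"
    using low by (meson not_le)
  txt \<open>\<open>(A - \<theta>\<^sub>d\<^sub>-\<^sub>i I) \<cdots> (A - \<theta>\<^sub>0 I)\<close> annihilates \<open>z\<close>, but moves its last nonzero
    \<open>E\<^sup>*\<close>-coordinate from \<open>m\<close> to \<open>m + r \<le> d\<close>.\<close>
  define r where "r = Suc (d - i)"
  define y where "y = shift_iter (Suc d) A th z r"
  have y: "y \<in> carrier_vec (Suc d)"
    unfolding y_def using shift_iter_carrier[OF A.M_carrier z] .
  have "(Qs *\<^sub>v y) $ (m + r) \<noteq> 0"
    using S.shift_iter_last_nonzero[OF A.M_carrier hessenberg_A subdiagonal_A z m(2,3), of r th]
      \<open>m < i\<close> i by (simp add: y_def r_def)
  then have "y \<noteq> 0\<^sub>v (Suc d)"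
    using mult_mat_vec_zero[OF S.Q_carrier] \<open>m < i\<close> i r_def by auto
  moreover have "Q *\<^sub>v y = 0\<^sub>v (Suc d)"
  proof (rule eq_vecI)
    fix k assume "k < dim_vec (0\<^sub>v (Suc d) :: 'a vec)"
    then have k: "k < Suc d"
      by simp
    have "(\<Prod>j<r. th k - th j) * (Q *\<^sub>v z) $ k = 0"
    proof (cases "d - i < k")
      case True
      then show ?thesis
        using high k A.Q_carrier by (simp add: vanishes_above_def)
    next
      case False
      then have "k \<in> {..<r}"
        by (simp add: r_def)
      then show ?thesis
        by (metis prod_zero_iff finite_lessThan diff_self mult_zero_left)
    qed
    then show "(Q *\<^sub>v y) $ k = 0\<^sub>v (Suc d) $ k"
      using k by (simp add: y_def A.coords_shift_iter[OF z])
  qed (use A.Q_carrier in simp)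
  ultimately show False
    using A.coords_eq_zero_iff[OF y] by simp
qed

lemma split_space_eq_multiple:
  assumes i: "i \<le> d" and x: "x \<in> split_space d (\<lambda>j. E (d - j)) Es i"
  shows "x = ((Qs *\<^sub>v x) $ i / (Qs *\<^sub>v u i) $ i) \<cdot>\<^sub>v u i"
proof -
  define t where "t = (Qs *\<^sub>v x) $ i / (Qs *\<^sub>v u i) $ i"
  have x_carrier: "x \<in> carrier_vec (Suc d)" and dual: "vanishes_above i (Qs *\<^sub>v x)"
    and primal: "vanishes_above (d - i) (Q *\<^sub>v x)"
    using x mem_split_space_iff[OF i] by auto
  have zero: "x - t \<cdot>\<^sub>v u i = 0\<^sub>v (Suc d)"
  proof (rule eq_zero_if_coords_vanish[OF i])
    show "x - t \<cdot>\<^sub>v u i \<in> carrier_vec (Suc d)"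
      using x_carrier u_carrier by simp
    show "\<forall>k<Suc d. i \<le> k \<longrightarrow> (Qs *\<^sub>v (x - t \<cdot>\<^sub>v u i)) $ k = 0"
      using dual u_last_nonzero[OF i] x_carrier u_carrier S.Q_carrier
      by (auto simp: S.coords_minus_smult t_def vanishes_above_def le_less)
    show "vanishes_above (d - i) (Q *\<^sub>v (x - t \<cdot>\<^sub>v u i))"
      using primal coords_u_vanish[OF i] x_carrier u_carrier A.Q_carrier
      by (auto simp: A.coords_minus_smult vanishes_above_def)
  qed
  show ?thesis
    unfolding t_def[symmetric]
  proof (rule eq_vecI)
    fix k assume k: "k < dim_vec (t \<cdot>\<^sub>v u i)"
    then have "(x - t \<cdot>\<^sub>v u i) $ k = 0"
      using carrier_vecD[OF u_carrier] by (simp add: zero)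
    then show "x $ k = (t \<cdot>\<^sub>v u i) $ k"
      using x_carrier u_carrier k by simp
  qed (use x_carrier carrier_vecD[OF u_carrier] in simp)
qed

text \<open>The coefficient in \<open>(A\<^sup>* - \<theta>\<^sup>*\<^sub>i I) u i = \<phi>\<^sub>i u (i - 1)\<close>, read off at the
  \<open>E\<^sup>*\<close>-coordinate \<open>i - 1\<close>.\<close>
definition phi :: "nat \<Rightarrow> 'a" where
  "phi i = (Qs *\<^sub>v ((As - ths i \<cdot>\<^sub>m 1\<^sub>m (Suc d)) *\<^sub>v u i)) $ (i - 1) / (Qs *\<^sub>v u (i - 1)) $ (i - 1)"

lemma shift_dual_u:
  assumes i: "1 \<le> i" "i \<le> d"
  shows "(As - ths i \<cdot>\<^sub>m 1\<^sub>m (Suc d)) *\<^sub>v u i = phi i \<cdot>\<^sub>v u (i - 1)"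
proof -
  let ?y = "(As - ths i \<cdot>\<^sub>m 1\<^sub>m (Suc d)) *\<^sub>v u i"
  have y: "?y \<in> carrier_vec (Suc d)"
    using S.M_carrier u_carrier by (intro mult_mat_vec_carrier) auto
  have "vanishes_above (i - 1) (Qs *\<^sub>v ?y)"
    unfolding vanishes_above_def
  proof (intro allI impI)
    fix k assume "k < dim_vec (Qs *\<^sub>v ?y)" and "i - 1 < k"
    then have k: "k < Suc d" and "i \<le> k"
      using S.Q_carrier i by auto
    then have "(ths k - ths i) * (Qs *\<^sub>v u i) $ k = 0"
      using u_last_nonzero(1)[OF i(2)] S.Q_carrier by (cases "k = i") (auto simp: vanishes_above_def)
    then show "(Qs *\<^sub>v ?y) $ k = 0"
      using k by (simp add: S.coords_shift[OF u_carrier])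
  qed
  moreover have "vanishes_above (Suc (d - i)) (Q *\<^sub>v ?y)"
  proof -
    have "Q *\<^sub>v ?y = (Q * As * P) *\<^sub>v (Q *\<^sub>v u i) - ths i \<cdot>\<^sub>v (Q *\<^sub>v u i)"
      by (rule A.coords_shift_mult[OF S.M_carrier u_carrier])
    moreover have "Q * As * P \<in> carrier_mat (Suc d) (Suc d)" and "Q *\<^sub>v u i \<in> carrier_vec (Suc d)"
      using A.Q_carrier S.M_carrier A.P_carrier u_carrier by auto
    ultimately show ?thesis
      using hessenberg_shift_vanishes_above[OF _ hessenberg_As _ coords_u_vanish[OF i(2)]] by simp
  qed
  moreover have "Suc (d - i) = d - (i - 1)"
    using i by simp
  ultimately have "?y \<in> split_space d (\<lambda>j. E (d - j)) Es (i - 1)"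
    using y mem_split_space_iff[of "i - 1"] i by simp
  from split_space_eq_multiple[OF _ this] i show ?thesis
    unfolding phi_def by simp
qed

lemma split_operator_u:
  assumes i: "1 \<le> i" "i \<le> d"
  shows "((A - th (d - (i - 1)) \<cdot>\<^sub>m 1\<^sub>m (Suc d)) * (As - ths i \<cdot>\<^sub>m 1\<^sub>m (Suc d))) *\<^sub>v u i = phi i \<cdot>\<^sub>v u i"
proof -
  let ?R = "A - th (d - (i - 1)) \<cdot>\<^sub>m 1\<^sub>m (Suc d)" and ?Rs = "As - ths i \<cdot>\<^sub>m 1\<^sub>m (Suc d)"
  have R: "?R \<in> carrier_mat (Suc d) (Suc d)" and Rs: "?Rs \<in> carrier_mat (Suc d) (Suc d)"
    using A.M_carrier S.M_carrier by auto
  have u_step: "u i = ?R *\<^sub>v u (i - 1)"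
    using i by (cases i) auto
  have "(?R * ?Rs) *\<^sub>v u i = ?R *\<^sub>v (phi i \<cdot>\<^sub>v u (i - 1))"
    using R Rs u_carrier by (simp add: shift_dual_u[OF i])
  also have "\<dots> = phi i \<cdot>\<^sub>v u i"
    unfolding u_step by (rule mult_mat_vec[OF R u_carrier])
  finally show ?thesis .
qed

lemma split_seq_eq_phi:
  assumes i: "1 \<le> i" "i \<le> d"
  shows "second_split_seq d A As E Es th ths i = phi i"
proof -
  let ?N = "(A - th (d - (i - 1)) \<cdot>\<^sub>m 1\<^sub>m (Suc d)) * (As - ths i \<cdot>\<^sub>m 1\<^sub>m (Suc d))"
  have N: "?N \<in> carrier_mat (Suc d) (Suc d)"
    using A.M_carrier S.M_carrier by auto
  have "\<forall>x\<in>split_space d (\<lambda>j. E (d - j)) Es i. ?N *\<^sub>v x = phi i \<cdot>\<^sub>v x"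
  proof
    fix x assume "x \<in> split_space d (\<lambda>j. E (d - j)) Es i"
    then obtain c where x: "x = c \<cdot>\<^sub>v u i"
      using split_space_eq_multiple i by blast
    show "?N *\<^sub>v x = phi i \<cdot>\<^sub>v x"
      unfolding x mult_mat_vec[OF N u_carrier] split_operator_u[OF i] smult_smult_assoc
      by (simp add: mult.commute)
  qed
  moreover have "c = phi i" if "\<forall>x\<in>split_space d (\<lambda>j. E (d - j)) Es i. ?N *\<^sub>v x = c \<cdot>\<^sub>v x" for c
  proof -
    have "c \<cdot>\<^sub>v u i = ?N *\<^sub>v u i"
      using that u_mem_split_space[OF i(2)] by simp
    also have "\<dots> = phi i \<cdot>\<^sub>v u i"
      by (rule split_operator_u[OF i])
    finally show ?thesis
      using smult_vec_cancel[OF _ u_carrier u_nonzero] i by simp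
  qed
  ultimately show ?thesis
    unfolding second_split_seq_def split_seq_def by (rule the_equality) blast
qed

lemma shift_iter_dual_u_d:
  "j \<le> d \<Longrightarrow> shift_iter (Suc d) As (\<lambda>h. ths (d - h)) (u d) j = (\<Prod>i\<in>{d - j<..d}. phi i) \<cdot>\<^sub>v u (d - j)"
proof (induction j)
  case 0
  show ?case
    using carrier_vecD[OF u_carrier] by (intro eq_vecI) simp_all
next
  case (Suc j)
  have R: "As - ths (d - j) \<cdot>\<^sub>m 1\<^sub>m (Suc d) \<in> carrier_mat (Suc d) (Suc d)"
    using S.M_carrier by auto
  have "shift_iter (Suc d) As (\<lambda>h. ths (d - h)) (u d) (Suc j)
      = (\<Prod>i\<in>{d - j<..d}. phi i) \<cdot>\<^sub>v ((As - ths (d - j) \<cdot>\<^sub>m 1\<^sub>m (Suc d)) *\<^sub>v u (d - j))"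
    using Suc by (simp add: mult_mat_vec[OF R u_carrier])
  also have "\<dots> = ((\<Prod>i\<in>{d - j<..d}. phi i) * phi (d - j)) \<cdot>\<^sub>v u (d - Suc j)"
    using Suc.prems by (simp add: shift_dual_u smult_smult_assoc)
  also have "(\<Prod>i\<in>{d - j<..d}. phi i) * phi (d - j) = (\<Prod>i\<in>{d - Suc j<..d}. phi i)"
  proof -
    have "{d - Suc j<..d} = insert (d - j) {d - j<..d}"
      using Suc.prems by auto
    then show ?thesis
      by (simp add: mult.commute)
  qed
  finally show ?case .
qed

lemma u_d_eq: "u d = ((\<Prod>h<d. th 0 - th (d - h)) * (Q *\<^sub>v col Ps 0) $ 0) \<cdot>\<^sub>v col P 0"
proof (rule A.coords_inject)
  show "Q *\<^sub>v u d = Q *\<^sub>v (((\<Prod>h<d. th 0 - th (d - h)) * (Q *\<^sub>v col Ps 0) $ 0) \<cdot>\<^sub>v col P 0)"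
  proof (rule eq_vecI)
    fix k assume k: "k < dim_vec (Q *\<^sub>v (((\<Prod>h<d. th 0 - th (d - h)) * (Q *\<^sub>v col Ps 0) $ 0) \<cdot>\<^sub>v col P 0))"
    then have "k < Suc d"
      using A.Q_carrier by simp
    moreover have "(\<Prod>h<d. th k - th (d - h)) = 0" if "0 < k" "k < Suc d"
      using prod_diff_reflect_eq_zero[of d d k th] that by simp
    ultimately show "(Q *\<^sub>v u d) $ k = (Q *\<^sub>v (((\<Prod>h<d. th 0 - th (d - h)) * (Q *\<^sub>v col Ps 0) $ 0) \<cdot>\<^sub>v col P 0)) $ k"
      by (auto simp: A.coords_shift_iter[OF S.col_P_carrier] mult_mat_vec[OF A.Q_carrier] A.coords_col_P)
  qed (use A.Q_carrier in simp)
qed (use u_carrier in simp_all)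

lemma mat_trace_E0_Es0:
  "mat_trace (E 0 * Es 0) = (Q *\<^sub>v col Ps 0) $ 0 * (Qs *\<^sub>v col P 0) $ 0"
proof -
  have E0: "E 0 = prim_idem d A th 0" and Es0: "Es 0 = prim_idem d As ths 0"
    using E Es by auto
  have E0_carrier: "E 0 \<in> carrier_mat (Suc d) (Suc d)" and Es0_carrier: "Es 0 \<in> carrier_mat (Suc d) (Suc d)"
    unfolding E0 Es0 using prim_idem_carrier A.M_carrier S.M_carrier by auto
  have diag: "(E 0 * Es 0) $$ (r, r) = (Q *\<^sub>v col Ps 0) $ 0 * (Qs $$ (0, r) * P $$ (r, 0))"
    if r: "r < Suc d" for r
  proof -
    have "(E 0 * Es 0) $$ (r, r) = (E 0 *\<^sub>v (Es 0 *\<^sub>v unit_vec (Suc d) r)) $ r"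
      using E0_carrier Es0_carrier r by (simp add: mult_unit_vec[OF Es0_carrier r])
    also have "Es 0 *\<^sub>v unit_vec (Suc d) r = Qs $$ (0, r) \<cdot>\<^sub>v col Ps 0"
      unfolding Es0 using S.Q_carrier r by (simp add: S.prim_idem_mult_vec)
    also have "E 0 *\<^sub>v (Qs $$ (0, r) \<cdot>\<^sub>v col Ps 0) = (Qs $$ (0, r) * (Q *\<^sub>v col Ps 0) $ 0) \<cdot>\<^sub>v col P 0"
      unfolding E0 by (simp add: mult_mat_vec[OF prim_idem_carrier[OF A.M_carrier]]
          A.prim_idem_mult_vec smult_smult_assoc)
    finally show ?thesis
      using r A.P_carrier by simp
  qed
  have "mat_trace (E 0 * Es 0) = (\<Sum>r<Suc d. (Q *\<^sub>v col Ps 0) $ 0 * (Qs $$ (0, r) * P $$ (r, 0)))"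
    unfolding mat_trace_def using E0_carrier diag by (simp del: sum.lessThan_Suc)
  also have "\<dots> = (Q *\<^sub>v col Ps 0) $ 0 * (Qs *\<^sub>v col P 0) $ 0"
    using S.Q_carrier A.P_carrier
    by (simp add: sum_distrib_left[symmetric] scalar_prod_def lessThan_atLeast0 del: sum.op_ivl_Suc)
  finally show ?thesis .
qed

text \<open>Both sides are the \<open>E\<^sup>*\<^sub>0\<close>-coordinate of \<open>\<eta>\<^sup>*\<^sub>d(A\<^sup>*) (u d)\<close>.\<close>
lemma prod_phi:
  "(\<Prod>i=1..d. phi i) = (\<Prod>h<d. ths 0 - ths (d - h)) * (\<Prod>h<d. th 0 - th (d - h)) * mat_trace (E 0 * Es 0)"
proof -
  let ?w = "shift_iter (Suc d) As (\<lambda>h. ths (d - h)) (u d) d"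
  have "{0<..d} = {1..d}"
    by auto
  then have "?w = (\<Prod>i=1..d. phi i) \<cdot>\<^sub>v col Ps 0"
    using shift_iter_dual_u_d[of d] by simp
  then have "(Qs *\<^sub>v ?w) $ 0 = (\<Prod>i=1..d. phi i)"
    by (simp add: mult_mat_vec[OF S.Q_carrier S.col_P_carrier] S.coords_col_P)
  moreover have "(Qs *\<^sub>v ?w) $ 0 = (\<Prod>h<d. ths 0 - ths (d - h)) * (Qs *\<^sub>v u d) $ 0"
    by (simp add: S.coords_shift_iter[OF u_carrier])
  moreover have "(Qs *\<^sub>v u d) $ 0 = (\<Prod>h<d. th 0 - th (d - h)) * mat_trace (E 0 * Es 0)"
    unfolding mat_trace_E0_Es0
    using S.Q_carrier by (subst u_d_eq) (simp add: mult_mat_vec[OF S.Q_carrier A.col_P_carrier])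
  ultimately show ?thesis
    by (simp add: ac_simps)
qed

theorem inverse_trace_formula:
  "1 / mat_trace (E 0 * Es 0) =
    (\<Prod>h=1..d. th 0 - th h) * (\<Prod>h=1..d. ths 0 - ths h) / (\<Prod>i=1..d. second_split_seq d A As E Es th ths i)"
proof -
  have "(\<Prod>i=1..d. second_split_seq d A As E Es th ths i) = (\<Prod>i=1..d. phi i)"
    using split_seq_eq_phi by (intro prod.cong) auto
  also have "\<dots> = (\<Prod>h=1..d. ths 0 - ths h) * (\<Prod>h=1..d. th 0 - th h) * mat_trace (E 0 * Es 0)"
    unfolding prod_phi prod_lessThan_reflect[of "\<lambda>h. ths 0 - ths h"]
      prod_lessThan_reflect[of "\<lambda>h. th 0 - th h"] ..
  finally have split: "(\<Prod>i=1..d. second_split_seq d A As E Es th ths i) = \<dots>" .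
  have "(\<Prod>h=1..d. th 0 - th h) \<noteq> 0" and "(\<Prod>h=1..d. ths 0 - ths h) \<noteq> 0"
    using A.inj S.inj by (auto dest: inj_onD)
  with split show ?thesis
    by (cases "mat_trace (E 0 * Es 0) = 0") (simp_all add: field_simps)
qed

end

lemma leonard_system_eigenbases:
  assumes "leonard_system d A As E Es"
  obtains P Q th Ps Qs ths where "leonard_eigenbases d A P Q th As Ps Qs ths E Es"
proof -
  have A: "A \<in> carrier_mat (Suc d) (Suc d)" and As: "As \<in> carrier_mat (Suc d) (Suc d)"
    and "idem_ordering d A E" and "idem_ordering d As Es"
    and far_E: "\<forall>i\<le>d. \<forall>j\<le>d. (i > j + 1 \<or> j > i + 1) \<longrightarrow> E i * As * E j = 0\<^sub>m (Suc d) (Suc d)"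
    and far_Es: "\<forall>i\<le>d. \<forall>j\<le>d. (i > j + 1 \<or> j > i + 1) \<longrightarrow> Es i * A * Es j = 0\<^sub>m (Suc d) (Suc d)"
    and near_Es: "\<forall>i\<le>d. \<forall>j\<le>d. (i = j + 1 \<or> j = i + 1) \<longrightarrow> Es i * A * Es j \<noteq> 0\<^sub>m (Suc d) (Suc d)"
    using assms unfolding leonard_system_def mult_free_def by blast+
  obtain P Q th where A_basis: "eigenbasis d A P Q th" and E: "\<forall>i\<le>d. E i = prim_idem d A th i"
    using idem_ordering_eigenbasis[OF A \<open>idem_ordering d A E\<close>] .
  obtain Ps Qs ths where As_basis: "eigenbasis d As Ps Qs ths" and Es: "\<forall>i\<le>d. Es i = prim_idem d As ths i"
    using idem_ordering_eigenbasis[OF As \<open>idem_ordering d As Es\<close>] .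
  have "upper_hessenberg (Qs * A * Ps)"
    using far_Es Es by (auto simp: eigenbasis.upper_hessenberg_conj_iff[OF As_basis A])
  moreover have "upper_hessenberg (Q * As * P)"
    using far_E E by (auto simp: eigenbasis.upper_hessenberg_conj_iff[OF A_basis As])
  moreover have "\<forall>q<d. (Qs * A * Ps) $$ (Suc q, q) \<noteq> 0"
  proof (intro allI impI)
    fix q assume "q < d"
    then have "Es (Suc q) * A * Es q \<noteq> 0\<^sub>m (Suc d) (Suc d)"
      using near_Es[rule_format, of "Suc q" q] by simp
    with \<open>q < d\<close> show "(Qs * A * Ps) $$ (Suc q, q) \<noteq> 0"
      using eigenbasis.prim_idem_sandwich_eq_zero_iff[OF As_basis _ _ A, of "Suc q" q] Es by simp
  qed
  ultimately show thesis
    using A_basis As_basis E Es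
    by (intro that[of P Q th Ps Qs ths]) (simp add: leonard_eigenbases_def leonard_eigenbases_axioms_def)
qed

lemma second_split_seq_cong:
  assumes "1 \<le> i" and "i \<le> d" and "\<forall>h\<le>d. th h = th' h" and "\<forall>h\<le>d. ths h = ths' h"
  shows "second_split_seq d A As E Es th ths i = second_split_seq d A As E Es th' ths' i"
  using assms unfolding second_split_seq_def split_seq_def by simp

theorem theorem23p7:
  fixes d :: nat and A As :: "'a::field mat" and E Es :: "nat \<Rightarrow> 'a mat"
    and th ths :: "nat \<Rightarrow> 'a"
  assumes "leonard_system d A As E Es"
    and "assoc_eigenvalues d A E th"
    and "assoc_eigenvalues d As Es ths"
  shows "1 / mat_trace (E 0 * Es 0) =
    (\<Prod>h=1..d. th 0 - th h) * (\<Prod>h=1..d. ths 0 - ths h) /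
    (\<Prod>i=1..d. second_split_seq d A As E Es th ths i)"
proof -
  obtain P Q f Ps Qs fs where "leonard_eigenbases d A P Q f As Ps Qs fs E Es"
    using leonard_system_eigenbases[OF assms(1)] .
  then interpret leonard_eigenbases d A P Q f As Ps Qs fs E Es .
  have th: "\<forall>h\<le>d. th h = f h" and ths: "\<forall>h\<le>d. ths h = fs h"
    using A.assoc_eigenvalues_unique[OF E assms(2)] S.assoc_eigenvalues_unique[OF Es assms(3)] by auto
  have "(\<Prod>i=1..d. second_split_seq d A As E Es th ths i) = (\<Prod>i=1..d. second_split_seq d A As E Es f fs i)"
    using th ths by (intro prod.cong refl second_split_seq_cong) auto
  moreover have "(\<Prod>h=1..d. th 0 - th h) = (\<Prod>h=1..d. f 0 - f h)"
    and "(\<Prod>h=1..d. ths 0 - ths h) = (\<Prod>h=1..d. fs 0 - fs h)"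
    using th ths by (auto intro: prod.cong)
  ultimately show ?thesis
    using inverse_trace_formula by simp
qed

end
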